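(* Let $\mathbf{D}$ be a 2-category with an enhanced factorization system $(\mathcal{E},\mathcal{M})$ and $\mathbf{C}$ a small 2-category, and assume $(\mathcal{E},\mathcal{M})$ separates parallel pairs, every 1-cell in $\mathcal{E}$ is a 2-epimorphism and every 1-cell in $\mathcal{M}$ is a 2-monomorphism. Then the pair $(\mathcal{E}^{\mathbf{C}},\mathcal{M}^{\mathbf{C}})$ in $\mathbf{D}^{\mathbf{C}}$ satisfies condition (iii) of the definition of enhanced factorization system: given $\varepsilon\colon F\Rightarrow F'$ in $\mathcal{E}^{\mathbf{C}}$, $\mu\colon G\Rightarrow G'$ in $\mathcal{M}^{\mathbf{C}}$, 2-natural transformations $\alpha_1,\alpha_2\colon F\Rightarrow G$, $\alpha_1',\alpha_2'\colon F'\Rightarrow G'$ with $\alpha_i'\varepsilon=\mu\alpha_i$, and modifications $\Phi\colon\alpha_1\Rrightarrow\alpha_2$, $\Phi'\colon\alpha_1'\Rrightarrow\alpha_2'$ with $\mu\Phi=\Phi'\varepsilon$, and letting $\delta_i\colon F'\Rightarrow G$ be the unique 2-natural transformations with $\delta_i\varepsilon=\alpha_i$ and $\mu\delta_i=\alpha_i'$, there is a unique modification $\Delta\colon\delta_1\Rrightarrow\delta_2$ with $\Delta\varepsilon=\Phi$ and $\mu\Delta=\Phi'$.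
   Context: For a 2-category $\mathbf{A}$, an enhanced factorization system on $\mathbf{A}$ is a pair $(\mathcal{E},\mathcal{M})$ of classes of 1-cells of $\mathbf{A}$, each containing all isomorphisms, such that: (i) every 1-cell $\alpha$ factors (not necessarily uniquely) as $\alpha=\mu\circ\varepsilon$ with $\varepsilon\in\mathcal{E}$, $\mu\in\mathcal{M}$; (ii) given $\varepsilon\colon F\to F'$ in $\mathcal{E}$, $\mu\colon G\to G'$ in $\mathcal{M}$, 1-cells $\alpha\colon F\to G$, $\alpha'\colon F'\to G'$ and an invertible 2-cell $\Psi\colon \alpha'\varepsilon\Rightarrow\mu\alpha$, there is a unique pair $(\delta,\widetilde\Psi)$ with $\delta\colon F'\to G$ a 1-cell and $\widetilde\Psi\colon\alpha'\Rightarrow\mu\delta$ an invertible 2-cell such that $\delta\varepsilon=\alpha$ and the whiskering $\widetilde\Psi\varepsilon=\Psi$; moreover if $\Psi$ is an identity then $\mu\delta=\alpha'$ and $\widetilde\Psi$ is an identity; (iii) given $\varepsilon\colon F\to F'$ in $\mathcal{E}$, $\mu\colon G\to G'$ in $\mathcal{M}$, parallel 1-cells $\alpha_1,\alpha_2\colon F\to G$ and $\alpha_1',\alpha_2'\colon F'\to G'$ with $\alpha_i'\varepsilon=\mu\alpha_i$ ($i=1,2$), and 2-cells $\Phi\colon\alpha_1\Rightarrow\alpha_2$, $\Phi'\colon\alpha_1'\Rightarrow\alpha_2'$ with $\mu\Phi=\Phi'\varepsilon$, let $\delta_i\colon F'\to G$ be the unique 1-cells with $\delta_i\varepsilon=\alpha_i$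 and $\mu\delta_i=\alpha_i'$ (from (ii) with identity 2-cell); then there is a unique 2-cell $\Delta\colon\delta_1\Rightarrow\delta_2$ with $\Delta\varepsilon=\Phi$ and $\mu\Delta=\Phi'$. $(\mathcal{E},\mathcal{M})$ separates parallel pairs if whenever $\alpha,\beta\colon F\to G$ are parallel 1-cells for which there exist $\varepsilon\in\mathcal{E}$ with target $F$ and $\alpha\varepsilon=\beta\varepsilon$, and $\mu\in\mathcal{M}$ with source $G$ and $\mu\alpha=\mu\beta$, then $\alpha=\beta$. A 1-cell $\varepsilon\colon F\to G$ is a 2-epimorphism if for all 1-cells $\beta,\beta'\colon G\to H$ and 2-cells $\Psi,\Psi'\colon\beta\Rightarrow\beta'$, $\Psi\varepsilon=\Psi'\varepsilon$ implies $\Psi=\Psi'$. A 1-cell $\mu\colon G\to H$ is a 2-monomorphism if for all 1-cells $\beta,\beta'\colon F\to G$ and 2-cells $\Psi,\Psi'\colon\beta\Rightarrow\beta'$, $\mu\Psi=\mu\Psi'$ implies $\Psi=\Psi'$. $\mathbf{D}^{\mathbf{C}}$ is the 2-category of 2-functors $\mathbf{C}\to\mathbf{D}$, 2-natural transformations, and modifications. $\mathcal{E}^{\mathbf{C}}$ (resp. $\mathcal{M}^{\mathbf{C}}$) is the class of 2-natural transformations all of whose components lie in $\mathcal{E}$ (resp. $\mathcal{M}$). *)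

theory Defs
  imports Main
begin

text \<open>A (strict) 2-category with objects of type 'o, 1-cells of type 'a and 2-cells of type 'b.
  cmp1 g f is the composite g after f; vcmp psi phi is the vertical composite (phi first);
  hcmp psi phi is the horizontal composite with phi : f => f' (x -> y) and psi : g => g' (y -> z),
  giving a 2-cell g f => g' f'.\<close>

record ('o, 'a, 'b) cat2 =
  obj  :: "'o set"
  arr1 :: "'a set"
  arr2 :: "'b set"
  src1 :: "'a \<Rightarrow> 'o"
  trg1 :: "'a \<Rightarrow> 'o"
  src2 :: "'b \<Rightarrow> 'a"
  trg2 :: "'b \<Rightarrow> 'a"
  idt1 :: "'o \<Rightarrow> 'a"
  cmp1 :: "'a \<Rightarrow> 'a \<Rightarrow> 'a"
  idt2 :: "'a \<Rightarrow> 'b"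
  vcmp :: "'b \<Rightarrow> 'b \<Rightarrow> 'b"
  hcmp :: "'b \<Rightarrow> 'b \<Rightarrow> 'b"

definition hom :: "('o, 'a, 'b) cat2 \<Rightarrow> 'o \<Rightarrow> 'o \<Rightarrow> 'a set" where
  "hom C x y = {f \<in> arr1 C. src1 C f = x \<and> trg1 C f = y}"

definition cell :: "('o, 'a, 'b) cat2 \<Rightarrow> 'a \<Rightarrow> 'a \<Rightarrow> 'b set" where
  "cell C f g = {\<theta> \<in> arr2 C. src2 C \<theta> = f \<and> trg2 C \<theta> = g}"

definition twocat :: "('o, 'a, 'b) cat2 \<Rightarrow> bool" where
  "twocat C \<longleftrightarrow>
    (\<forall>f \<in> arr1 C. src1 C f \<in> obj C \<and> trg1 C f \<in> obj C) \<and>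
    (\<forall>\<theta> \<in> arr2 C. src2 C \<theta> \<in> arr1 C \<and> trg2 C \<theta> \<in> arr1 C \<and>
        src1 C (src2 C \<theta>) = src1 C (trg2 C \<theta>) \<and> trg1 C (src2 C \<theta>) = trg1 C (trg2 C \<theta>)) \<and>
    (\<forall>x \<in> obj C. idt1 C x \<in> hom C x x) \<and>
    (\<forall>x y z f g. f \<in> hom C x y \<longrightarrow> g \<in> hom C y z \<longrightarrow> cmp1 C g f \<in> hom C x z) \<and>
    (\<forall>x y f. f \<in> hom C x y \<longrightarrow> cmp1 C f (idt1 C x) = f \<and> cmp1 C (idt1 C y) f = f) \<and>
    (\<forall>w x y z f g h. f \<in> hom C w x \<longrightarrow> g \<in> hom C x y \<longrightarrow> h \<in> hom C y z \<longrightarrow>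
        cmp1 C h (cmp1 C g f) = cmp1 C (cmp1 C h g) f) \<and>
    (\<forall>f \<in> arr1 C. idt2 C f \<in> cell C f f) \<and>
    (\<forall>f g h \<phi> \<psi>. \<phi> \<in> cell C f g \<longrightarrow> \<psi> \<in> cell C g h \<longrightarrow> vcmp C \<psi> \<phi> \<in> cell C f h) \<and>
    (\<forall>f g \<phi>. \<phi> \<in> cell C f g \<longrightarrow> vcmp C \<phi> (idt2 C f) = \<phi> \<and> vcmp C (idt2 C g) \<phi> = \<phi>) \<and>
    (\<forall>f g h k \<phi> \<psi> \<chi>. \<phi> \<in> cell C f g \<longrightarrow> \<psi> \<in> cell C g h \<longrightarrow> \<chi> \<in> cell C h k \<longrightarrow>
        vcmp C \<chi> (vcmp C \<psi> \<phi>) = vcmp C (vcmp C \<chi> \<psi>) \<phi>) \<and>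
    (\<forall>x y z f f' g g' \<phi> \<psi>. f \<in> hom C x y \<longrightarrow> f' \<in> hom C x y \<longrightarrow> g \<in> hom C y z \<longrightarrow> g' \<in> hom C y z \<longrightarrow>
        \<phi> \<in> cell C f f' \<longrightarrow> \<psi> \<in> cell C g g' \<longrightarrow>
        hcmp C \<psi> \<phi> \<in> cell C (cmp1 C g f) (cmp1 C g' f')) \<and>
    (\<forall>x y f f' \<phi>. f \<in> hom C x y \<longrightarrow> f' \<in> hom C x y \<longrightarrow> \<phi> \<in> cell C f f' \<longrightarrow>
        hcmp C \<phi> (idt2 C (idt1 C x)) = \<phi> \<and> hcmp C (idt2 C (idt1 C y)) \<phi> = \<phi>) \<and>
    (\<forall>w x y z f f' g g' h h' \<phi> \<psi> \<chi>. f \<in> hom C w x \<longrightarrow> f' \<in> hom C w x \<longrightarrow>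
        g \<in> hom C x y \<longrightarrow> g' \<in> hom C x y \<longrightarrow> h \<in> hom C y z \<longrightarrow> h' \<in> hom C y z \<longrightarrow>
        \<phi> \<in> cell C f f' \<longrightarrow> \<psi> \<in> cell C g g' \<longrightarrow> \<chi> \<in> cell C h h' \<longrightarrow>
        hcmp C \<chi> (hcmp C \<psi> \<phi>) = hcmp C (hcmp C \<chi> \<psi>) \<phi>) \<and>
    (\<forall>x y z f g. f \<in> hom C x y \<longrightarrow> g \<in> hom C y z \<longrightarrow>
        hcmp C (idt2 C g) (idt2 C f) = idt2 C (cmp1 C g f)) \<and>
    (\<forall>x y z f f' f'' g g' g'' \<phi> \<phi>' \<psi> \<psi>'. f \<in> hom C x y \<longrightarrow> f' \<in> hom C x y \<longrightarrow> f'' \<in> hom C x y \<longrightarrow>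
        g \<in> hom C y z \<longrightarrow> g' \<in> hom C y z \<longrightarrow> g'' \<in> hom C y z \<longrightarrow>
        \<phi> \<in> cell C f f' \<longrightarrow> \<phi>' \<in> cell C f' f'' \<longrightarrow> \<psi> \<in> cell C g g' \<longrightarrow> \<psi>' \<in> cell C g' g'' \<longrightarrow>
        vcmp C (hcmp C \<psi>' \<phi>') (hcmp C \<psi> \<phi>) = hcmp C (vcmp C \<psi>' \<psi>) (vcmp C \<phi>' \<phi>))"

definition iso1 :: "('o, 'a, 'b) cat2 \<Rightarrow> 'a \<Rightarrow> bool" where
  "iso1 C f \<longleftrightarrow> f \<in> arr1 C \<and>
     (\<exists>g \<in> hom C (trg1 C f) (src1 C f).
        cmp1 C g f = idt1 C (src1 C f) \<and> cmp1 C f g = idt1 C (trg1 C f))"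

definition iso2 :: "('o, 'a, 'b) cat2 \<Rightarrow> 'b \<Rightarrow> bool" where
  "iso2 C \<theta> \<longleftrightarrow> \<theta> \<in> arr2 C \<and>
     (\<exists>\<theta>' \<in> cell C (trg2 C \<theta>) (src2 C \<theta>).
        vcmp C \<theta>' \<theta> = idt2 C (src2 C \<theta>) \<and> vcmp C \<theta> \<theta>' = idt2 C (trg2 C \<theta>))"

definition efs_iii :: "('o, 'a, 'b) cat2 \<Rightarrow> 'a set \<Rightarrow> 'a set \<Rightarrow> bool" where
  "efs_iii D E M \<longleftrightarrow>
    (\<forall>F F' G G' \<epsilon> \<mu> \<alpha>1 \<alpha>2 \<alpha>1' \<alpha>2' \<Phi> \<Phi>' \<delta>1 \<delta>2.
       \<epsilon> \<in> E \<longrightarrow> \<epsilon> \<in> hom D F F' \<longrightarrow> \<mu> \<in> M \<longrightarrow> \<mu> \<in> hom D G G' \<longrightarrow>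
       \<alpha>1 \<in> hom D F G \<longrightarrow> \<alpha>2 \<in> hom D F G \<longrightarrow> \<alpha>1' \<in> hom D F' G' \<longrightarrow> \<alpha>2' \<in> hom D F' G' \<longrightarrow>
       cmp1 D \<alpha>1' \<epsilon> = cmp1 D \<mu> \<alpha>1 \<longrightarrow> cmp1 D \<alpha>2' \<epsilon> = cmp1 D \<mu> \<alpha>2 \<longrightarrow>
       \<Phi> \<in> cell D \<alpha>1 \<alpha>2 \<longrightarrow> \<Phi>' \<in> cell D \<alpha>1' \<alpha>2' \<longrightarrow>
       hcmp D (idt2 D \<mu>) \<Phi> = hcmp D \<Phi>' (idt2 D \<epsilon>) \<longrightarrow>
       \<delta>1 \<in> hom D F' G \<longrightarrow> cmp1 D \<delta>1 \<epsilon> = \<alpha>1 \<longrightarrow> cmp1 D \<mu> \<delta>1 = \<alpha>1' \<longrightarrow>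
       \<delta>2 \<in> hom D F' G \<longrightarrow> cmp1 D \<delta>2 \<epsilon> = \<alpha>2 \<longrightarrow> cmp1 D \<mu> \<delta>2 = \<alpha>2' \<longrightarrow>
       (\<exists>!\<Delta>. \<Delta> \<in> cell D \<delta>1 \<delta>2 \<and> hcmp D \<Delta> (idt2 D \<epsilon>) = \<Phi> \<and> hcmp D (idt2 D \<mu>) \<Delta> = \<Phi>'))"

definition enhanced_fs :: "('o, 'a, 'b) cat2 \<Rightarrow> 'a set \<Rightarrow> 'a set \<Rightarrow> bool" where
  "enhanced_fs D E M \<longleftrightarrow>
    E \<subseteq> arr1 D \<and> M \<subseteq> arr1 D \<and>
    {f. iso1 D f} \<subseteq> E \<and> {f. iso1 D f} \<subseteq> M \<and>
    \<comment> \<open>(i) factorization\<close>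
    (\<forall>\<alpha> \<in> arr1 D. \<exists>\<epsilon> \<in> E. \<exists>\<mu> \<in> M. trg1 D \<epsilon> = src1 D \<mu> \<and> cmp1 D \<mu> \<epsilon> = \<alpha>) \<and>
    \<comment> \<open>(ii) lifting against invertible 2-cells\<close>
    (\<forall>F F' G G' \<epsilon> \<mu> \<alpha> \<alpha>' \<Psi>.
       \<epsilon> \<in> E \<longrightarrow> \<epsilon> \<in> hom D F F' \<longrightarrow> \<mu> \<in> M \<longrightarrow> \<mu> \<in> hom D G G' \<longrightarrow>
       \<alpha> \<in> hom D F G \<longrightarrow> \<alpha>' \<in> hom D F' G' \<longrightarrow>
       \<Psi> \<in> cell D (cmp1 D \<alpha>' \<epsilon>) (cmp1 D \<mu> \<alpha>) \<longrightarrow> iso2 D \<Psi> \<longrightarrow>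
       (\<exists>!p. fst p \<in> hom D F' G \<and> snd p \<in> cell D \<alpha>' (cmp1 D \<mu> (fst p)) \<and> iso2 D (snd p) \<and>
             cmp1 D (fst p) \<epsilon> = \<alpha> \<and> hcmp D (snd p) (idt2 D \<epsilon>) = \<Psi>) \<and>
       (\<Psi> = idt2 D (cmp1 D \<alpha>' \<epsilon>) \<longrightarrow>
          (\<forall>\<delta> \<Psi>'. \<delta> \<in> hom D F' G \<longrightarrow> \<Psi>' \<in> cell D \<alpha>' (cmp1 D \<mu> \<delta>) \<longrightarrow> iso2 D \<Psi>' \<longrightarrow>
             cmp1 D \<delta> \<epsilon> = \<alpha> \<longrightarrow> hcmp D \<Psi>' (idt2 D \<epsilon>) = \<Psi> \<longrightarrow>
             cmp1 D \<mu> \<delta> = \<alpha>' \<and> \<Psi>' = idt2 D \<alpha>'))) \<and>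
    \<comment> \<open>(iii) lifting of 2-cells\<close>
    efs_iii D E M"

definition separates_parallel_pairs :: "('o, 'a, 'b) cat2 \<Rightarrow> 'a set \<Rightarrow> 'a set \<Rightarrow> bool" where
  "separates_parallel_pairs D E M \<longleftrightarrow>
    (\<forall>F G \<alpha> \<beta>. \<alpha> \<in> hom D F G \<longrightarrow> \<beta> \<in> hom D F G \<longrightarrow>
       (\<exists>\<epsilon> \<in> E. trg1 D \<epsilon> = F \<and> cmp1 D \<alpha> \<epsilon> = cmp1 D \<beta> \<epsilon>) \<longrightarrow>
       (\<exists>\<mu> \<in> M. src1 D \<mu> = G \<and> cmp1 D \<mu> \<alpha> = cmp1 D \<mu> \<beta>) \<longrightarrow> \<alpha> = \<beta>)"

definition two_epi :: "('o, 'a, 'b) cat2 \<Rightarrow> 'a \<Rightarrow> bool" where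
  "two_epi D \<epsilon> \<longleftrightarrow> \<epsilon> \<in> arr1 D \<and>
    (\<forall>H \<beta> \<beta>' \<Psi> \<Psi>'. \<beta> \<in> hom D (trg1 D \<epsilon>) H \<longrightarrow> \<beta>' \<in> hom D (trg1 D \<epsilon>) H \<longrightarrow>
       \<Psi> \<in> cell D \<beta> \<beta>' \<longrightarrow> \<Psi>' \<in> cell D \<beta> \<beta>' \<longrightarrow>
       hcmp D \<Psi> (idt2 D \<epsilon>) = hcmp D \<Psi>' (idt2 D \<epsilon>) \<longrightarrow> \<Psi> = \<Psi>')"

definition two_mono :: "('o, 'a, 'b) cat2 \<Rightarrow> 'a \<Rightarrow> bool" where
  "two_mono D \<mu> \<longleftrightarrow> \<mu> \<in> arr1 D \<and>
    (\<forall>F \<beta> \<beta>' \<Psi> \<Psi>'. \<beta> \<in> hom D F (src1 D \<mu>) \<longrightarrow> \<beta>' \<in> hom D F (src1 D \<mu>) \<longrightarrow>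
       \<Psi> \<in> cell D \<beta> \<beta>' \<longrightarrow> \<Psi>' \<in> cell D \<beta> \<beta>' \<longrightarrow>
       hcmp D (idt2 D \<mu>) \<Psi> = hcmp D (idt2 D \<mu>) \<Psi>' \<longrightarrow> \<Psi> = \<Psi>')"

record ('o1, 'a1, 'b1, 'o2, 'a2, 'b2) functor2 =
  fob :: "'o1 \<Rightarrow> 'o2"
  far1 :: "'a1 \<Rightarrow> 'a2"
  far2 :: "'b1 \<Rightarrow> 'b2"

definition twofunctor ::
  "('o1, 'a1, 'b1) cat2 \<Rightarrow> ('o2, 'a2, 'b2) cat2 \<Rightarrow> ('o1, 'a1, 'b1, 'o2, 'a2, 'b2) functor2 \<Rightarrow> bool" where
  "twofunctor C D F \<longleftrightarrow>
    (\<forall>x \<in> obj C. fob F x \<in> obj D) \<and>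
    (\<forall>x y f. f \<in> hom C x y \<longrightarrow> far1 F f \<in> hom D (fob F x) (fob F y)) \<and>
    (\<forall>f g \<theta>. \<theta> \<in> cell C f g \<longrightarrow> far2 F \<theta> \<in> cell D (far1 F f) (far1 F g)) \<and>
    (\<forall>x \<in> obj C. far1 F (idt1 C x) = idt1 D (fob F x)) \<and>
    (\<forall>x y z f g. f \<in> hom C x y \<longrightarrow> g \<in> hom C y z \<longrightarrow>
        far1 F (cmp1 C g f) = cmp1 D (far1 F g) (far1 F f)) \<and>
    (\<forall>f \<in> arr1 C. far2 F (idt2 C f) = idt2 D (far1 F f)) \<and>
    (\<forall>f g h \<phi> \<psi>. \<phi> \<in> cell C f g \<longrightarrow> \<psi> \<in> cell C g h \<longrightarrow>
        far2 F (vcmp C \<psi> \<phi>) = vcmp D (far2 F \<psi>) (far2 F \<phi>)) \<and>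
    (\<forall>x y z f f' g g' \<phi> \<psi>. f \<in> hom C x y \<longrightarrow> f' \<in> hom C x y \<longrightarrow> g \<in> hom C y z \<longrightarrow> g' \<in> hom C y z \<longrightarrow>
        \<phi> \<in> cell C f f' \<longrightarrow> \<psi> \<in> cell C g g' \<longrightarrow>
        far2 F (hcmp C \<psi> \<phi>) = hcmp D (far2 F \<psi>) (far2 F \<phi>))"

definition twonat ::
  "('o1, 'a1, 'b1) cat2 \<Rightarrow> ('o2, 'a2, 'b2) cat2 \<Rightarrow> ('o1, 'a1, 'b1, 'o2, 'a2, 'b2) functor2 \<Rightarrow>
   ('o1, 'a1, 'b1, 'o2, 'a2, 'b2) functor2 \<Rightarrow> ('o1 \<Rightarrow> 'a2) \<Rightarrow> bool" where
  "twonat C D F G \<alpha> \<longleftrightarrow>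
    (\<forall>x \<in> obj C. \<alpha> x \<in> hom D (fob F x) (fob G x)) \<and>
    (\<forall>x y f. f \<in> hom C x y \<longrightarrow> cmp1 D (far1 G f) (\<alpha> x) = cmp1 D (\<alpha> y) (far1 F f)) \<and>
    (\<forall>x y f g \<theta>. f \<in> hom C x y \<longrightarrow> g \<in> hom C x y \<longrightarrow> \<theta> \<in> cell C f g \<longrightarrow>
        hcmp D (far2 G \<theta>) (idt2 D (\<alpha> x)) = hcmp D (idt2 D (\<alpha> y)) (far2 F \<theta>))"

definition modif ::
  "('o1, 'a1, 'b1) cat2 \<Rightarrow> ('o2, 'a2, 'b2) cat2 \<Rightarrow> ('o1, 'a1, 'b1, 'o2, 'a2, 'b2) functor2 \<Rightarrow>
   ('o1, 'a1, 'b1, 'o2, 'a2, 'b2) functor2 \<Rightarrow> ('o1 \<Rightarrow> 'a2) \<Rightarrow> ('o1 \<Rightarrow> 'a2) \<Rightarrow> ('o1 \<Rightarrow> 'b2) \<Rightarrow> bool" where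
  "modif C D F G \<alpha> \<beta> \<Gamma> \<longleftrightarrow>
    (\<forall>x \<in> obj C. \<Gamma> x \<in> cell D (\<alpha> x) (\<beta> x)) \<and>
    (\<forall>x y f. f \<in> hom C x y \<longrightarrow>
        hcmp D (idt2 D (far1 G f)) (\<Gamma> x) = hcmp D (\<Gamma> y) (idt2 D (far1 F f)))"

end

theory Submission
  imports Defs
begin

text \<open>The lift is built objectwise: condition (iii) in \<open>D\<close> yields, for each object \<open>x\<close>, a unique
  2-cell \<open>\<Delta> x\<close> with \<open>\<Delta> x \<epsilon> x = \<Phi> x\<close> and \<open>\<mu> x \<Delta> x = \<Phi>' x\<close>, so existence and uniqueness
  of the modification reduce to showing that the family \<open>\<Delta>\<close> is a modification at all. Whiskering
  its naturality square with \<open>\<epsilon> x\<close> and using the naturality of \<open>\<epsilon>\<close> turns it into the naturality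
  square of \<open>\<Phi>\<close>, and \<open>\<epsilon> x\<close> is a 2-epimorphism.\<close>

lemma twocat_comp_in_hom:
  assumes "twocat D" "f \<in> hom D x y" "g \<in> hom D y z"
  shows "cmp1 D g f \<in> hom D x z"
  using assms unfolding twocat_def by (elim conjE) meson

lemma twocat_idt2_in_cell:
  assumes "twocat D" "f \<in> hom D x y"
  shows "idt2 D f \<in> cell D f f"
  using assms unfolding twocat_def hom_def by (elim conjE) blast

lemma twocat_hcmp_in_cell:
  assumes "twocat D" "f \<in> hom D x y" "f' \<in> hom D x y" "g \<in> hom D y z" "g' \<in> hom D y z"
    "\<phi> \<in> cell D f f'" "\<psi> \<in> cell D g g'"
  shows "hcmp D \<psi> \<phi> \<in> cell D (cmp1 D g f) (cmp1 D g' f')"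
  using assms unfolding twocat_def by (elim conjE) meson

lemma twocat_hcmp_assoc:
  assumes "twocat D" "f \<in> hom D w x" "f' \<in> hom D w x" "g \<in> hom D x y" "g' \<in> hom D x y"
    "h \<in> hom D y z" "h' \<in> hom D y z" "\<phi> \<in> cell D f f'" "\<psi> \<in> cell D g g'" "\<chi> \<in> cell D h h'"
  shows "hcmp D \<chi> (hcmp D \<psi> \<phi>) = hcmp D (hcmp D \<chi> \<psi>) \<phi>"
  using assms unfolding twocat_def by (elim conjE) meson

lemma twocat_hcmp_idt2:
  assumes "twocat D" "f \<in> hom D x y" "g \<in> hom D y z"
  shows "hcmp D (idt2 D g) (idt2 D f) = idt2 D (cmp1 D g f)"
  using assms unfolding twocat_def by (elim conjE) meson

lemma twocat_hom_objs:
  assumes "twocat C" "f \<in> hom C x y"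
  shows "x \<in> obj C \<and> y \<in> obj C"
  using assms unfolding twocat_def hom_def by (elim conjE) blast

lemma twofunctor_far1_in_hom:
  assumes "twofunctor C D F" "f \<in> hom C x y"
  shows "far1 F f \<in> hom D (fob F x) (fob F y)"
  using assms unfolding twofunctor_def by (elim conjE) meson

lemma twonat_in_hom:
  assumes "twonat C D F G \<alpha>" "x \<in> obj C"
  shows "\<alpha> x \<in> hom D (fob F x) (fob G x)"
  using assms unfolding twonat_def by blast

lemma twonat_naturality:
  assumes "twonat C D F G \<alpha>" "f \<in> hom C x y"
  shows "cmp1 D (far1 G f) (\<alpha> x) = cmp1 D (\<alpha> y) (far1 F f)"
  using assms unfolding twonat_def by blast

lemma modif_in_cell:
  assumes "modif C D F G \<alpha> \<beta> \<Gamma>" "x \<in> obj C"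
  shows "\<Gamma> x \<in> cell D (\<alpha> x) (\<beta> x)"
  using assms unfolding modif_def by blast

lemma modif_naturality:
  assumes "modif C D F G \<alpha> \<beta> \<Gamma>" "f \<in> hom C x y"
  shows "hcmp D (idt2 D (far1 G f)) (\<Gamma> x) = hcmp D (\<Gamma> y) (idt2 D (far1 F f))"
  using assms unfolding modif_def by blast

lemma hcmp_whisker_left_right:
  assumes "twocat D" "e \<in> hom D a b" "d1 \<in> hom D b c" "d2 \<in> hom D b c" "g \<in> hom D c z"
    "\<Delta> \<in> cell D d1 d2"
  shows "hcmp D (hcmp D (idt2 D g) \<Delta>) (idt2 D e) = hcmp D (idt2 D g) (hcmp D \<Delta> (idt2 D e))"
  using twocat_hcmp_assoc[OF assms(1,2,2,3,4,5,5) twocat_idt2_in_cell[OF assms(1,2)] assms(6)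
      twocat_idt2_in_cell[OF assms(1,5)]]
  by simp

lemma hcmp_whisker_right_comp:
  assumes "twocat D" "e \<in> hom D a b" "f \<in> hom D b c" "d1 \<in> hom D c z" "d2 \<in> hom D c z"
    "\<Delta> \<in> cell D d1 d2"
  shows "hcmp D (hcmp D \<Delta> (idt2 D f)) (idt2 D e) = hcmp D \<Delta> (idt2 D (cmp1 D f e))"
  using twocat_hcmp_assoc[OF assms(1,2,2,3,3,4,5) twocat_idt2_in_cell[OF assms(1,2)]
      twocat_idt2_in_cell[OF assms(1,3)] assms(6)]
    twocat_hcmp_idt2[OF assms(1-3)]
  by simp

lemma modif_if_whiskered_by_2epi:
  assumes "twocat C" "twocat D"
    and "twofunctor C D F" "twofunctor C D F'" "twofunctor C D G"
    and \<epsilon>: "twonat C D F F' \<epsilon>" and epi: "\<forall>x \<in> obj C. two_epi D (\<epsilon> x)"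
    and \<delta>1: "twonat C D F' G \<delta>1" and \<delta>2: "twonat C D F' G \<delta>2"
    and \<Delta>: "\<forall>x \<in> obj C. \<Delta> x \<in> cell D (\<delta>1 x) (\<delta>2 x)"
    and \<Phi>: "modif C D F G \<alpha>1 \<alpha>2 \<Phi>"
    and \<Delta>\<epsilon>: "\<forall>x \<in> obj C. hcmp D (\<Delta> x) (idt2 D (\<epsilon> x)) = \<Phi> x"
  shows "modif C D F' G \<delta>1 \<delta>2 \<Delta>"
  unfolding modif_def
proof (intro conjI allI impI)
  show "\<forall>x \<in> obj C. \<Delta> x \<in> cell D (\<delta>1 x) (\<delta>2 x)" by (fact \<Delta>)
  fix x y f
  assume f: "f \<in> hom C x y"
  then have x: "x \<in> obj C" and y: "y \<in> obj C"
    using twocat_hom_objs[OF assms(1)] by auto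
  have Ff: "far1 F f \<in> hom D (fob F x) (fob F y)"
    and F'f: "far1 F' f \<in> hom D (fob F' x) (fob F' y)"
    and Gf: "far1 G f \<in> hom D (fob G x) (fob G y)"
    using twofunctor_far1_in_hom[OF assms(3) f] twofunctor_far1_in_hom[OF assms(4) f]
      twofunctor_far1_in_hom[OF assms(5) f] by simp_all
  have \<epsilon>x: "\<epsilon> x \<in> hom D (fob F x) (fob F' x)" and \<epsilon>y: "\<epsilon> y \<in> hom D (fob F y) (fob F' y)"
    using twonat_in_hom[OF \<epsilon>] x y by simp_all
  have \<delta>x: "\<delta>1 x \<in> hom D (fob F' x) (fob G x)" "\<delta>2 x \<in> hom D (fob F' x) (fob G x)"
    and \<delta>y: "\<delta>1 y \<in> hom D (fob F' y) (fob G y)" "\<delta>2 y \<in> hom D (fob F' y) (fob G y)"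
    using twonat_in_hom[OF \<delta>1] twonat_in_hom[OF \<delta>2] x y by simp_all
  have \<Delta>x: "\<Delta> x \<in> cell D (\<delta>1 x) (\<delta>2 x)" and \<Delta>y: "\<Delta> y \<in> cell D (\<delta>1 y) (\<delta>2 y)"
    using \<Delta> x y by simp_all
  have "hcmp D (hcmp D (idt2 D (far1 G f)) (\<Delta> x)) (idt2 D (\<epsilon> x))
      = hcmp D (idt2 D (far1 G f)) (\<Phi> x)"
    using hcmp_whisker_left_right[OF assms(2) \<epsilon>x \<delta>x Gf \<Delta>x] \<Delta>\<epsilon> x by simp
  also have "\<dots> = hcmp D (\<Phi> y) (idt2 D (far1 F f))"
    using modif_naturality[OF \<Phi> f] .
  also have "\<dots> = hcmp D (\<Delta> y) (idt2 D (cmp1 D (\<epsilon> y) (far1 F f)))"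
    using hcmp_whisker_right_comp[OF assms(2) Ff \<epsilon>y \<delta>y \<Delta>y] \<Delta>\<epsilon> y by simp
  also have "\<dots> = hcmp D (hcmp D (\<Delta> y) (idt2 D (far1 F' f))) (idt2 D (\<epsilon> x))"
    using hcmp_whisker_right_comp[OF assms(2) \<epsilon>x F'f \<delta>y \<Delta>y] twonat_naturality[OF \<epsilon> f] by simp
  finally have whiskered_eq: "hcmp D (hcmp D (idt2 D (far1 G f)) (\<Delta> x)) (idt2 D (\<epsilon> x))
      = hcmp D (hcmp D (\<Delta> y) (idt2 D (far1 F' f))) (idt2 D (\<epsilon> x))" .
  have trg\<epsilon>: "trg1 D (\<epsilon> x) = fob F' x"
    using \<epsilon>x unfolding hom_def by blast
  have "cmp1 D (far1 G f) (\<delta>1 x) \<in> hom D (trg1 D (\<epsilon> x)) (fob G y)"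
    "cmp1 D (far1 G f) (\<delta>2 x) \<in> hom D (trg1 D (\<epsilon> x)) (fob G y)"
    using twocat_comp_in_hom[OF assms(2) _ Gf] \<delta>x trg\<epsilon> by auto
  moreover have "hcmp D (idt2 D (far1 G f)) (\<Delta> x)
      \<in> cell D (cmp1 D (far1 G f) (\<delta>1 x)) (cmp1 D (far1 G f) (\<delta>2 x))"
    using twocat_hcmp_in_cell[OF assms(2) \<delta>x Gf Gf \<Delta>x twocat_idt2_in_cell[OF assms(2) Gf]] .
  moreover have "hcmp D (\<Delta> y) (idt2 D (far1 F' f))
      \<in> cell D (cmp1 D (far1 G f) (\<delta>1 x)) (cmp1 D (far1 G f) (\<delta>2 x))"
    using twocat_hcmp_in_cell[OF assms(2) F'f F'f \<delta>y twocat_idt2_in_cell[OF assms(2) F'f] \<Delta>y]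
      twonat_naturality[OF \<delta>1 f] twonat_naturality[OF \<delta>2 f] by simp
  ultimately show "hcmp D (idt2 D (far1 G f)) (\<Delta> x) = hcmp D (\<Delta> y) (idt2 D (far1 F' f))"
    using epi x whiskered_eq unfolding two_epi_def by blast
qed

lemma efs_iiiD:
  assumes "efs_iii D E M" and "\<epsilon> \<in> E" "\<epsilon> \<in> hom D F F'" "\<mu> \<in> M" "\<mu> \<in> hom D G G'"
    and "\<alpha>1 \<in> hom D F G" "\<alpha>2 \<in> hom D F G" "\<alpha>1' \<in> hom D F' G'" "\<alpha>2' \<in> hom D F' G'"
    and "cmp1 D \<alpha>1' \<epsilon> = cmp1 D \<mu> \<alpha>1" "cmp1 D \<alpha>2' \<epsilon> = cmp1 D \<mu> \<alpha>2"
    and "\<Phi> \<in> cell D \<alpha>1 \<alpha>2" "\<Phi>' \<in> cell D \<alpha>1' \<alpha>2'"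
    and "hcmp D (idt2 D \<mu>) \<Phi> = hcmp D \<Phi>' (idt2 D \<epsilon>)"
    and "\<delta>1 \<in> hom D F' G" "cmp1 D \<delta>1 \<epsilon> = \<alpha>1" "cmp1 D \<mu> \<delta>1 = \<alpha>1'"
    and "\<delta>2 \<in> hom D F' G" "cmp1 D \<delta>2 \<epsilon> = \<alpha>2" "cmp1 D \<mu> \<delta>2 = \<alpha>2'"
  shows "\<exists>!\<Delta>. \<Delta> \<in> cell D \<delta>1 \<delta>2 \<and> hcmp D \<Delta> (idt2 D \<epsilon>) = \<Phi> \<and> hcmp D (idt2 D \<mu>) \<Delta> = \<Phi>'"
  using assms(1) unfolding efs_iii_def by (elim allE impE) (use assms(2-) in simp_all)

lemma unique_modification_lift:
  assumes "twocat C" "twocat D" and iii: "efs_iii D E M" and epi: "\<forall>e \<in> E. two_epi D e"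
    and "twofunctor C D F" "twofunctor C D F'" "twofunctor C D G"
    and \<epsilon>: "twonat C D F F' \<epsilon>" and \<epsilon>E: "\<forall>x \<in> obj C. \<epsilon> x \<in> E"
    and \<mu>: "twonat C D G G' \<mu>" and \<mu>M: "\<forall>x \<in> obj C. \<mu> x \<in> M"
    and \<alpha>1: "twonat C D F G \<alpha>1" and \<alpha>2: "twonat C D F G \<alpha>2"
    and \<alpha>1': "twonat C D F' G' \<alpha>1'" and \<alpha>2': "twonat C D F' G' \<alpha>2'"
    and sq1: "\<forall>x \<in> obj C. cmp1 D (\<alpha>1' x) (\<epsilon> x) = cmp1 D (\<mu> x) (\<alpha>1 x)"
    and sq2: "\<forall>x \<in> obj C. cmp1 D (\<alpha>2' x) (\<epsilon> x) = cmp1 D (\<mu> x) (\<alpha>2 x)"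
    and \<Phi>: "modif C D F G \<alpha>1 \<alpha>2 \<Phi>" and \<Phi>': "modif C D F' G' \<alpha>1' \<alpha>2' \<Phi>'"
    and sq\<Phi>: "\<forall>x \<in> obj C. hcmp D (idt2 D (\<mu> x)) (\<Phi> x) = hcmp D (\<Phi>' x) (idt2 D (\<epsilon> x))"
    and \<delta>1: "twonat C D F' G \<delta>1"
    and tri1: "\<forall>x \<in> obj C. cmp1 D (\<delta>1 x) (\<epsilon> x) = \<alpha>1 x \<and> cmp1 D (\<mu> x) (\<delta>1 x) = \<alpha>1' x"
    and \<delta>2: "twonat C D F' G \<delta>2"
    and tri2: "\<forall>x \<in> obj C. cmp1 D (\<delta>2 x) (\<epsilon> x) = \<alpha>2 x \<and> cmp1 D (\<mu> x) (\<delta>2 x) = \<alpha>2' x"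
  shows "\<exists>\<Delta>. modif C D F' G \<delta>1 \<delta>2 \<Delta> \<and>
      (\<forall>x \<in> obj C. hcmp D (\<Delta> x) (idt2 D (\<epsilon> x)) = \<Phi> x) \<and>
      (\<forall>x \<in> obj C. hcmp D (idt2 D (\<mu> x)) (\<Delta> x) = \<Phi>' x) \<and>
      (\<forall>\<Delta>'. modif C D F' G \<delta>1 \<delta>2 \<Delta>' \<and>
          (\<forall>x \<in> obj C. hcmp D (\<Delta>' x) (idt2 D (\<epsilon> x)) = \<Phi> x) \<and>
          (\<forall>x \<in> obj C. hcmp D (idt2 D (\<mu> x)) (\<Delta>' x) = \<Phi>' x) \<longrightarrow>
          (\<forall>x \<in> obj C. \<Delta>' x = \<Delta> x))"
proof -
  define lift where "lift x \<Delta> \<longleftrightarrow> \<Delta> \<in> cell D (\<delta>1 x) (\<delta>2 x) \<and>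
      hcmp D \<Delta> (idt2 D (\<epsilon> x)) = \<Phi> x \<and> hcmp D (idt2 D (\<mu> x)) \<Delta> = \<Phi>' x" for x \<Delta>
  have lift_ex1: "\<exists>!\<Delta>. lift x \<Delta>" if x: "x \<in> obj C" for x
    unfolding lift_def
    by (rule efs_iiiD[OF iii _ twonat_in_hom[OF \<epsilon> x] _ twonat_in_hom[OF \<mu> x]
          twonat_in_hom[OF \<alpha>1 x] twonat_in_hom[OF \<alpha>2 x] twonat_in_hom[OF \<alpha>1' x]
          twonat_in_hom[OF \<alpha>2' x] _ _ modif_in_cell[OF \<Phi> x] modif_in_cell[OF \<Phi>' x] _
          twonat_in_hom[OF \<delta>1 x] _ _ twonat_in_hom[OF \<delta>2 x]])
      (use x \<epsilon>E \<mu>M sq1 sq2 sq\<Phi> tri1 tri2 in simp_all)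
  then obtain \<Delta> where lift_\<Delta>: "\<forall>x \<in> obj C. lift x (\<Delta> x)"
    by (metis bchoice)
  have "modif C D F' G \<delta>1 \<delta>2 \<Delta>"
  proof (rule modif_if_whiskered_by_2epi[OF assms(1,2,5-8) _ \<delta>1 \<delta>2 _ \<Phi>])
    show "\<forall>x \<in> obj C. two_epi D (\<epsilon> x)" using epi \<epsilon>E by blast
  qed (use lift_\<Delta> in \<open>simp_all add: lift_def\<close>)
  moreover have "\<Delta>' x = \<Delta> x"
    if "modif C D F' G \<delta>1 \<delta>2 \<Delta>'" "x \<in> obj C"
      and "\<forall>x \<in> obj C. hcmp D (\<Delta>' x) (idt2 D (\<epsilon> x)) = \<Phi> x"
      and "\<forall>x \<in> obj C. hcmp D (idt2 D (\<mu> x)) (\<Delta>' x) = \<Phi>' x" for \<Delta>' x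
    using lift_ex1[OF that(2)] lift_\<Delta> modif_in_cell[OF that(1,2)] that(2-) unfolding lift_def by blast
  ultimately show ?thesis
    using lift_\<Delta> unfolding lift_def by blast
qed

theorem lemma3p3:
  fixes C :: "('o1, 'a1, 'b1) cat2" and D :: "('o2, 'a2, 'b2) cat2"
    and E M :: "'a2 set"
  assumes "twocat C" and "twocat D"
    and "enhanced_fs D E M"
    and "separates_parallel_pairs D E M"
    and "\<forall>e \<in> E. two_epi D e"
    and "\<forall>m \<in> M. two_mono D m"
  shows "\<forall>F F' G G' \<epsilon> \<mu> \<alpha>1 \<alpha>2 \<alpha>1' \<alpha>2' \<Phi> \<Phi>' \<delta>1 \<delta>2.
    twofunctor C D F \<longrightarrow> twofunctor C D F' \<longrightarrow> twofunctor C D G \<longrightarrow> twofunctor C D G' \<longrightarrow>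
    twonat C D F F' \<epsilon> \<longrightarrow> (\<forall>x \<in> obj C. \<epsilon> x \<in> E) \<longrightarrow>
    twonat C D G G' \<mu> \<longrightarrow> (\<forall>x \<in> obj C. \<mu> x \<in> M) \<longrightarrow>
    twonat C D F G \<alpha>1 \<longrightarrow> twonat C D F G \<alpha>2 \<longrightarrow>
    twonat C D F' G' \<alpha>1' \<longrightarrow> twonat C D F' G' \<alpha>2' \<longrightarrow>
    (\<forall>x \<in> obj C. cmp1 D (\<alpha>1' x) (\<epsilon> x) = cmp1 D (\<mu> x) (\<alpha>1 x)) \<longrightarrow>
    (\<forall>x \<in> obj C. cmp1 D (\<alpha>2' x) (\<epsilon> x) = cmp1 D (\<mu> x) (\<alpha>2 x)) \<longrightarrow>
    modif C D F G \<alpha>1 \<alpha>2 \<Phi> \<longrightarrow> modif C D F' G' \<alpha>1' \<alpha>2' \<Phi>' \<longrightarrow>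
    (\<forall>x \<in> obj C. hcmp D (idt2 D (\<mu> x)) (\<Phi> x) = hcmp D (\<Phi>' x) (idt2 D (\<epsilon> x))) \<longrightarrow>
    twonat C D F' G \<delta>1 \<longrightarrow>
    (\<forall>x \<in> obj C. cmp1 D (\<delta>1 x) (\<epsilon> x) = \<alpha>1 x \<and> cmp1 D (\<mu> x) (\<delta>1 x) = \<alpha>1' x) \<longrightarrow>
    twonat C D F' G \<delta>2 \<longrightarrow>
    (\<forall>x \<in> obj C. cmp1 D (\<delta>2 x) (\<epsilon> x) = \<alpha>2 x \<and> cmp1 D (\<mu> x) (\<delta>2 x) = \<alpha>2' x) \<longrightarrow>
    (\<exists>\<Delta>. modif C D F' G \<delta>1 \<delta>2 \<Delta> \<and>
        (\<forall>x \<in> obj C. hcmp D (\<Delta> x) (idt2 D (\<epsilon> x)) = \<Phi> x) \<and>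
        (\<forall>x \<in> obj C. hcmp D (idt2 D (\<mu> x)) (\<Delta> x) = \<Phi>' x) \<and>
        (\<forall>\<Delta>'. modif C D F' G \<delta>1 \<delta>2 \<Delta>' \<and>
            (\<forall>x \<in> obj C. hcmp D (\<Delta>' x) (idt2 D (\<epsilon> x)) = \<Phi> x) \<and>
            (\<forall>x \<in> obj C. hcmp D (idt2 D (\<mu> x)) (\<Delta>' x) = \<Phi>' x) \<longrightarrow>
            (\<forall>x \<in> obj C. \<Delta>' x = \<Delta> x)))"
proof -
  have iii: "efs_iii D E M"
    using assms(3) unfolding enhanced_fs_def by blast
  show ?thesis
    by (intro allI impI, rule unique_modification_lift[OF assms(1,2) iii assms(5)]) assumption+
qed

end
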